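(* Let $G$ be a graph and $e=\{u,v\}\notin G$ an edge between vertices of $G$. Let $K=K(G)$ and $K'=K(G\cup\{e\})$ be the clique complexes, and for each $j$ let $i_j:\mathrm{H}_j(K\cap\mathrm{st}_{K'}(e))\to\mathrm{H}_j(K)$ be the map induced by inclusion (reduced homology over a field). Define $F_k^+(e)=\mathrm{rk}(\ker i_{k-1})$ and $F_k^-(e)=\mathrm{rk}(\mathrm{im}\, i_{k-1})$. Then \[ \beta_k(K')=\beta_k(K)+F_k^+(e)-F_{k+1}^-(e)\quad(k>0),\qquad \beta_0(K')=\beta_0(K)-F_1^-(e), \] and \[ F_k^+(e)+F_k^-(e)=\beta_{k-2}(\mathrm{lk}_{K'}(e))\quad(k>1),\qquad F_1^+(e)+F_1^-(e)=\mathbf{1}\{\mathrm{lk}_{K'}(e)=\emptyset\}. \]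
   Context: The clique complex $K(G)$ of a graph $G$ is the maximal simplicial complex whose 1-skeleton is $G$. For a simplex $\sigma$ of a complex $K$, the closed star $\mathrm{st}_K(\sigma)$ is the smallest subcomplex containing all simplices $\tau\supseteq\sigma$, and the link is $\mathrm{lk}_K(\sigma)=\{\tau\in\mathrm{st}_K(\sigma):\sigma\cap\tau=\emptyset\}$. $\beta_k$ denotes the reduced Betti number (rank of reduced homology over the field). *)

theory Defs
  imports Complex_Main "HOL-Library.Function_Algebras"
begin

text \<open>Simplicial complexes are represented as sets of finite
  vertex sets closed under subsets; the empty simplex is included (it serves as the
  (-1)-dimensional face, which yields reduced homology).\<close>

definition clique_complex :: "'a set \<Rightarrow> 'a set set \<Rightarrow> 'a set set" where
  "clique_complex V E =
     {\<sigma>. \<sigma> \<subseteq> V \<and> finite \<sigma> \<and> (\<forall>x\<in>\<sigma>. \<forall>y\<in>\<sigma>. x \<noteq> y \<longrightarrow> {x, y} \<in> E)}"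

definition closed_star :: "'a set set \<Rightarrow> 'a set \<Rightarrow> 'a set set" where
  "closed_star K \<sigma> = {\<tau>. \<exists>\<rho>\<in>K. \<sigma> \<subseteq> \<rho> \<and> \<tau> \<subseteq> \<rho>}"

definition link :: "'a set set \<Rightarrow> 'a set \<Rightarrow> 'a set set" where
  "link K \<sigma> = {\<tau> \<in> closed_star K \<sigma>. \<sigma> \<inter> \<tau> = {}}"

definition fscale :: "'f::field \<Rightarrow> ('b \<Rightarrow> 'f) \<Rightarrow> ('b \<Rightarrow> 'f)" where
  "fscale a c = (\<lambda>x. a * c x)"

definition fdim :: "('b \<Rightarrow> 'f::field) set \<Rightarrow> nat" where
  "fdim V = vector_space.dim (fscale :: 'f \<Rightarrow> ('b \<Rightarrow> 'f) \<Rightarrow> ('b \<Rightarrow> 'f)) V"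

text \<open>Dimension of the quotient space V/W (for finite-dimensional subspaces W \<subseteq> V).\<close>
definition qdim :: "('b \<Rightarrow> 'f::field) set \<Rightarrow> ('b \<Rightarrow> 'f) set \<Rightarrow> int" where
  "qdim V W = int (fdim V) - int (fdim W)"

text \<open>k-chains of L (k :: int, k \<ge> -1; the (-1)-chains are multiples of the empty
  simplex): coefficient functions supported on simplices of L with k+1 vertices.
  Simplices are oriented by the linear order of the vertices.\<close>
definition chains :: "'f::field itself \<Rightarrow> int \<Rightarrow> 'a set set \<Rightarrow> ('a set \<Rightarrow> 'f) set" where
  "chains F k L = {c. \<forall>\<sigma>. c \<sigma> \<noteq> 0 \<longrightarrow> \<sigma> \<in> L \<and> finite \<sigma> \<and> int (card \<sigma>) = k + 1}"

definition bd :: "('a::linorder set \<Rightarrow> 'f::field) \<Rightarrow> 'a set \<Rightarrow> 'f" where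
  "bd c \<tau> = (\<Sum>v\<in>{v. v \<notin> \<tau> \<and> c (insert v \<tau>) \<noteq> 0}.
               (-1) ^ card {w\<in>\<tau>. w < v} * c (insert v \<tau>))"

definition cycles :: "'f::field itself \<Rightarrow> int \<Rightarrow> 'a::linorder set set \<Rightarrow> ('a set \<Rightarrow> 'f) set" where
  "cycles F k L = {c \<in> chains F k L. bd c = (\<lambda>_. 0)}"

definition boundaries :: "'f::field itself \<Rightarrow> int \<Rightarrow> 'a::linorder set set \<Rightarrow> ('a set \<Rightarrow> 'f) set" where
  "boundaries F k L = bd ` chains F (k + 1) L"

definition betti :: "'f::field itself \<Rightarrow> int \<Rightarrow> 'a::linorder set set \<Rightarrow> int" where
  "betti F k L = qdim (cycles F k L) (boundaries F k L)"

text \<open>For a subcomplex L \<subseteq> K, the inclusion-induced map i_j : H_j(L) \<rightarrow> H_j(K),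
  [z] \<mapsto> [z]. Its kernel is (Z_j(L) \<inter> B_j(K)) / B_j(L) and its image is
  (Z_j(L) + B_j(K)) / B_j(K).\<close>
definition incl_ker_rank :: "'f::field itself \<Rightarrow> int \<Rightarrow> 'a::linorder set set \<Rightarrow> 'a set set \<Rightarrow> int" where
  "incl_ker_rank F j L K = qdim (cycles F j L \<inter> boundaries F j K) (boundaries F j L)"

definition incl_im_rank :: "'f::field itself \<Rightarrow> int \<Rightarrow> 'a::linorder set set \<Rightarrow> 'a set set \<Rightarrow> int" where
  "incl_im_rank F j L K =
     qdim {(\<lambda>x. z x + b x) | z b. z \<in> cycles F j L \<and> b \<in> boundaries F j K} (boundaries F j K)"

definition Fplus :: "'f::field itself \<Rightarrow> 'a::linorder set set \<Rightarrow> 'a set set \<Rightarrow> 'a set \<Rightarrow> int \<Rightarrow> int" where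
  "Fplus F K K' e k = incl_ker_rank F (k - 1) (K \<inter> closed_star K' e) K"

definition Fminus :: "'f::field itself \<Rightarrow> 'a::linorder set set \<Rightarrow> 'a set set \<Rightarrow> 'a set \<Rightarrow> int \<Rightarrow> int" where
  "Fminus F K K' e k = incl_im_rank F (k - 1) (K \<inter> closed_star K' e) K"

end

theory Submission
  imports Defs
begin

text \<open>Write \<open>K' = K \<union> St\<close>, where \<open>St\<close> is the closed star of the new edge \<open>e = {u, v}\<close> in \<open>K'\<close>
  and \<open>K \<inter> St = L\<close>. A cone is acyclic, and \<open>St\<close> is a cone with apex \<open>u\<close>. For an acyclic
  subcomplex \<open>S\<close>, counting dimensions with rank--nullity for the boundary maps and Grassmann's
  formula for chains and boundaries gives the Mayer--Vietoris relation
  \<open>\<beta>\<^sub>k(A \<union> S) = \<beta>\<^sub>k(A) + rk ker i\<^sub>k\<^sub>-\<^sub>1 - rk im i\<^sub>k\<close> for the maps \<open>i\<^sub>j : H\<^sub>j(A \<inter> S) \<rightarrow> H\<^sub>j(A)\<close>;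
  with \<open>A = K\<close>, \<open>S = St\<close> this is the first identity. Moreover \<open>rk ker i\<^sub>j + rk im i\<^sub>j = \<beta>\<^sub>j(L)\<close>, and
  \<open>L\<close> is the union of the simplices avoiding \<open>v\<close> (a cone with apex \<open>u\<close>) and those avoiding \<open>u\<close>
  (a cone with apex \<open>v\<close>), which intersect in the link of \<open>e\<close>; the same relation for two
  acyclic complexes gives \<open>\<beta>\<^sub>j(L) = \<beta>\<^sub>j\<^sub>-\<^sub>1(lk e)\<close>. In degree \<open>-1\<close>, reduced homology vanishes
  as soon as there is a vertex, and is one-dimensional for the complex \<open>{\<emptyset>}\<close>.\<close>

section \<open>Finite-dimensional spaces of functions\<close>

interpretation fs: vector_space "fscale :: 'f::field \<Rightarrow> ('b \<Rightarrow> 'f) \<Rightarrow> ('b \<Rightarrow> 'f)"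
  by unfold_locales (auto simp: fscale_def algebra_simps)

interpretation fsp: vector_space_pair "fscale :: 'f::field \<Rightarrow> ('b \<Rightarrow> 'f) \<Rightarrow> ('b \<Rightarrow> 'f)"
   "fscale :: 'f::field \<Rightarrow> ('b \<Rightarrow> 'f) \<Rightarrow> ('b \<Rightarrow> 'f)" ..

definition fin_dim :: "('b \<Rightarrow> 'f::field) set \<Rightarrow> bool" where
  "fin_dim S \<longleftrightarrow> (\<exists>W. finite W \<and> S \<subseteq> fs.span W)"

lemma fin_dim_subset: "fin_dim S \<Longrightarrow> T \<subseteq> S \<Longrightarrow> fin_dim T"
  unfolding fin_dim_def by blast

lemma fin_dim_image:
  assumes "fin_dim S" "module_hom fscale fscale f"
  shows "fin_dim (f ` S)"
proof -
  interpret f: module_hom fscale fscale f by (rule assms(2))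
  obtain W where "finite W" "S \<subseteq> fs.span W" using assms(1) unfolding fin_dim_def by blast
  then have "finite (f ` W)" "f ` S \<subseteq> fs.span (f ` W)" by (simp_all add: f.spans_image)
  then show ?thesis unfolding fin_dim_def by blast
qed

lemma fin_dim_basis_extend:
  fixes S U :: "('b \<Rightarrow> 'f::field) set"
  assumes "fin_dim U" "S \<subseteq> U" "fs.independent S"
  obtains B where "S \<subseteq> B" "B \<subseteq> U" "fs.independent B" "U \<subseteq> fs.span B" "finite B" "card B = fdim U"
proof -
  obtain B where B: "S \<subseteq> B" "B \<subseteq> U" "fs.independent B" "U \<subseteq> fs.span B"
    using fs.maximal_independent_subset_extend[OF assms(2,3)] by blast
  obtain W where W: "finite W" "U \<subseteq> fs.span W" using assms(1) unfolding fin_dim_def by blast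
  have "finite B"
    using fs.independent_span_bound[OF W(1) B(3)] B(2) W(2) by blast
  moreover have "card B = fdim U" unfolding fdim_def by (rule fs.basis_card_eq_dim[OF B(2,4,3)])
  ultimately show ?thesis using that B by blast
qed

lemma fin_dim_basis:
  fixes U :: "('b \<Rightarrow> 'f::field) set"
  assumes "fin_dim U"
  obtains B where "B \<subseteq> U" "fs.independent B" "U \<subseteq> fs.span B" "finite B" "card B = fdim U"
  by (rule fin_dim_basis_extend[OF assms empty_subsetI fs.independent_empty]) (rule that)

context
  fixes U :: "('b \<Rightarrow> 'f::field) set" and f :: "('b \<Rightarrow> 'f) \<Rightarrow> ('b \<Rightarrow> 'f)"
  assumes U: "fs.subspace U" "fin_dim U" and f: "module_hom fscale fscale f"
begin

interpretation f: module_hom fscale fscale f by (rule f)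

lemma fdim_kernel_add_fdim_image_le: "fdim {x\<in>U. f x = 0} + fdim (f ` U) \<le> fdim U"
proof -
  let ?N = "{x\<in>U. f x = 0}"
  have "?N = U \<inter> {x. f x = 0}" by blast
  then have "fs.subspace ?N" using fs.subspace_inter[OF U(1) f.subspace_kernel] by simp
  have "fin_dim ?N" by (rule fin_dim_subset[OF U(2)]) blast
  then obtain B0 where B0: "B0 \<subseteq> ?N" "fs.independent B0" "?N \<subseteq> fs.span B0" "finite B0" "card B0 = fdim ?N"
    by (rule fin_dim_basis)
  have "B0 \<subseteq> U" using B0(1) by blast
  then obtain B where B: "B0 \<subseteq> B" "B \<subseteq> U" "fs.independent B" "U \<subseteq> fs.span B" "finite B" "card B = fdim U"
    by (rule fin_dim_basis_extend[OF U(2) _ B0(2)])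
  have "f ` U \<subseteq> fs.span (f ` (B - B0))"
  proof
    fix y assume "y \<in> f ` U"
    then obtain x where x: "x \<in> U" "y = f x" by blast
    have "B0 \<union> (B - B0) = B" using B(1) by blast
    then have "x \<in> fs.span (B0 \<union> (B - B0))" using B(4) x(1) by auto
    then obtain a b where ab: "x = a + b" "a \<in> fs.span B0" "b \<in> fs.span (B - B0)"
      unfolding fs.span_Un by blast
    have "f a = 0" using ab(2) fs.span_minimal[OF B0(1) \<open>fs.subspace ?N\<close>] by blast
    then have "y = f b" using x(2) ab(1) f.add by simp
    moreover have "f b \<in> f ` fs.span (B - B0)" using ab(3) by (rule imageI)
    ultimately show "y \<in> fs.span (f ` (B - B0))" by (simp add: f.span_image)
  qed
  then have "fdim (f ` U) \<le> card (f ` (B - B0))"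
    unfolding fdim_def by (rule fs.dim_le_card) (use B(5) in auto)
  also have "\<dots> \<le> card (B - B0)" using B(5) by (intro card_image_le) simp
  also have "\<dots> = card B - card B0" by (rule card_Diff_subset[OF B0(4) B(1)])
  finally show ?thesis using B0(5) B(6) card_mono[OF B(5,1)] by linarith
qed

lemma fdim_le_fdim_kernel_add_fdim_image: "fdim U \<le> fdim {x\<in>U. f x = 0} + fdim (f ` U)"
proof -
  let ?N = "{x\<in>U. f x = 0}"
  have "fin_dim ?N" by (rule fin_dim_subset[OF U(2)]) blast
  then obtain B0 where B0: "B0 \<subseteq> ?N" "?N \<subseteq> fs.span B0" "finite B0" "card B0 = fdim ?N"
    by (rule fin_dim_basis)
  obtain C where C: "C \<subseteq> f ` U" "f ` U \<subseteq> fs.span C" "finite C" "card C = fdim (f ` U)"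
    by (rule fin_dim_basis[OF fin_dim_image[OF U(2) f]])
  have "\<forall>c\<in>C. \<exists>x\<in>U. f x = c" using C(1) by blast
  then obtain g where g: "\<And>c. c \<in> C \<Longrightarrow> g c \<in> U \<and> f (g c) = c" by metis
  have "U \<subseteq> fs.span (B0 \<union> g ` C)"
  proof
    fix x assume x: "x \<in> U"
    obtain a where a: "f x = (\<Sum>c\<in>C. fscale (a c) c)"
      using C(2) x fs.span_finite[OF C(3)] by blast
    define y where "y = (\<Sum>c\<in>C. fscale (a c) (g c))"
    have "y \<in> U" unfolding y_def using g
      by (intro fs.subspace_sum[OF U(1)] fs.subspace_scale[OF U(1)]) auto
    moreover have "f y = f x" unfolding y_def a using g by (simp add: f.sum f.scale)
    ultimately have "x - y \<in> fs.span B0"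
      using x fs.subspace_diff[OF U(1)] B0(2) by (auto simp: f.diff)
    moreover have "y \<in> fs.span (g ` C)" unfolding y_def
      by (intro fs.span_sum fs.span_scale fs.span_base) auto
    ultimately have "(x - y) + y \<in> fs.span (B0 \<union> g ` C)"
      using fs.span_mono[of B0 "B0 \<union> g ` C"] fs.span_mono[of "g ` C" "B0 \<union> g ` C"]
      by (intro fs.span_add) auto
    then show "x \<in> fs.span (B0 \<union> g ` C)" by simp
  qed
  then have "fdim U \<le> card (B0 \<union> g ` C)"
    unfolding fdim_def by (rule fs.dim_le_card) (use B0(3) C(3) in auto)
  also have "\<dots> \<le> card B0 + card C"
    using card_Un_le[of B0 "g ` C"] card_image_le[OF C(3), of g] by linarith
  finally show ?thesis using B0(4) C(4) by linarith
qed

theorem rank_nullity: "fdim U = fdim {x\<in>U. f x = 0} + fdim (f ` U)"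
  using fdim_kernel_add_fdim_image_le fdim_le_fdim_kernel_add_fdim_image by linarith

end

lemma projection_with_kernel:
  fixes S W :: "('b \<Rightarrow> 'f::field) set"
  assumes "fin_dim S" "fs.subspace W" "W \<subseteq> S"
  obtains p :: "('b \<Rightarrow> 'f) \<Rightarrow> ('b \<Rightarrow> 'f)"
  where "module_hom fscale fscale p" "{x\<in>S. p x = 0} = W"
proof -
  obtain BW where BW: "BW \<subseteq> W" "fs.independent BW" "W \<subseteq> fs.span BW"
    by (rule fin_dim_basis[OF fin_dim_subset[OF assms(1,3)]])
  have "BW \<subseteq> S" using BW(1) assms(3) by blast
  then obtain B where B: "BW \<subseteq> B" "fs.independent B" "S \<subseteq> fs.span B"
    by (rule fin_dim_basis_extend[OF assms(1) _ BW(2)])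
  define p where "p = fsp.construct B (\<lambda>b. if b \<in> BW then 0 else b)"
  have lin: "Vector_Spaces.linear fscale fscale p"
    unfolding p_def by (rule fsp.linear_construct[OF B(2)])
  then have hom: "module_hom fscale fscale p" by (simp add: linear_iff_module_hom)
  interpret p: module_hom fscale fscale p by (rule hom)
  have pB: "p b = (if b \<in> BW then 0 else b)" if "b \<in> B" for b
    unfolding p_def by (rule fsp.construct_basis[OF B(2) that])
  have p_BW: "p x = 0" if "x \<in> fs.span BW" for x
    by (rule p.eq_0_on_span[OF _ that]) (use pB B(1) in auto)
  have ker: "p x = 0 \<longleftrightarrow> x \<in> W" if "x \<in> S" for x
  proof -
    have "BW \<union> (B - BW) = B" using B(1) by blast
    then have "x \<in> fs.span (BW \<union> (B - BW))" using B(3) that by auto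
    then obtain a b where ab: "x = a + b" "a \<in> fs.span BW" "b \<in> fs.span (B - BW)"
      unfolding fs.span_Un by blast
    have "p b = id b"
      by (rule fsp.module_hom_eq_on_span[OF lin fs.module_hom_id _ ab(3)]) (use pB in auto)
    then have "p x = b" using ab p_BW p.add by simp
    have "a \<in> W" using ab(2) fs.span_minimal[OF BW(1) assms(2)] by blast
    show ?thesis
    proof
      assume "p x = 0"
      then show "x \<in> W" using \<open>p x = b\<close> ab(1) \<open>a \<in> W\<close> by simp
    qed (use BW(3) p_BW in blast)
  qed
  have "{x\<in>S. p x = 0} = W" using ker assms(3) by blast
  with hom show ?thesis by (rule that)
qed

definition subspace_sum :: "('b \<Rightarrow> 'f::field) set \<Rightarrow> ('b \<Rightarrow> 'f) set \<Rightarrow> ('b \<Rightarrow> 'f) set" where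
  "subspace_sum U W = {x + y | x y. x \<in> U \<and> y \<in> W}"

lemma subspace_subspace_sum: "fs.subspace U \<Longrightarrow> fs.subspace W \<Longrightarrow> fs.subspace (subspace_sum U W)"
  unfolding subspace_sum_def by (rule fs.subspace_sums)

lemma subset_subspace_sum:
  assumes "fs.subspace U" "fs.subspace W"
  shows "U \<subseteq> subspace_sum U W" and "W \<subseteq> subspace_sum U W"
proof -
  show "U \<subseteq> subspace_sum U W"
  proof
    fix x assume "x \<in> U"
    then show "x \<in> subspace_sum U W" unfolding subspace_sum_def
      using fs.subspace_0[OF assms(2)] by (intro CollectI exI[of _ x] exI[of _ 0]) simp
  qed
  show "W \<subseteq> subspace_sum U W"
  proof
    fix y assume "y \<in> W"
    then show "y \<in> subspace_sum U W" unfolding subspace_sum_def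
      using fs.subspace_0[OF assms(1)] by (intro CollectI exI[of _ 0] exI[of _ y]) simp
  qed
qed

lemma fin_dim_subspace_sum:
  assumes "fin_dim U" "fin_dim W"
  shows "fin_dim (subspace_sum U W)"
proof -
  obtain SU SW where "finite SU" "U \<subseteq> fs.span SU" "finite SW" "W \<subseteq> fs.span SW"
    using assms unfolding fin_dim_def by blast
  then have "subspace_sum U W \<subseteq> fs.span (SU \<union> SW)"
    unfolding subspace_sum_def fs.span_Un by blast
  then show ?thesis unfolding fin_dim_def using \<open>finite SU\<close> \<open>finite SW\<close> by blast
qed

text \<open>The library's \<open>dim_sums_Int\<close> needs a finite-dimensional ambient space.\<close>
theorem fdim_subspace_sum_add_fdim_Int:
  fixes U W :: "('b \<Rightarrow> 'f::field) set"
  assumes U: "fs.subspace U" "fin_dim U" and W: "fs.subspace W" "fin_dim W"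
  shows "fdim (subspace_sum U W) + fdim (U \<inter> W) = fdim U + fdim W"
proof -
  let ?S = "subspace_sum U W"
  have S: "fs.subspace ?S" "fin_dim ?S"
    using subspace_subspace_sum[OF U(1) W(1)] fin_dim_subspace_sum[OF U(2) W(2)] .
  obtain p :: "('b \<Rightarrow> 'f) \<Rightarrow> ('b \<Rightarrow> 'f)" where p: "module_hom fscale fscale p" "{x\<in>?S. p x = 0} = W"
    by (rule projection_with_kernel[OF S(2) W(1) subset_subspace_sum(2)[OF U(1) W(1)]])
  interpret p: module_hom fscale fscale p by (rule p(1))
  have U_S: "U \<subseteq> ?S" by (rule subset_subspace_sum(1)[OF U(1) W(1)])
  have "p ` ?S = p ` U"
  proof
    show "p ` ?S \<subseteq> p ` U"
    proof
      fix z assume "z \<in> p ` ?S"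
      then obtain x y where "x \<in> U" "y \<in> W" "z = p (x + y)" unfolding subspace_sum_def by blast
      moreover have "p y = 0" using p(2) \<open>y \<in> W\<close> by blast
      ultimately show "z \<in> p ` U" by (simp add: p.add)
    qed
  qed (use U_S in blast)
  then have "fdim ?S = fdim W + fdim (p ` U)" using rank_nullity[OF S p(1)] p(2) by simp
  moreover have "{x\<in>U. p x = 0} = U \<inter> W" using p(2) U_S by blast
  then have "fdim U = fdim (U \<inter> W) + fdim (p ` U)" using rank_nullity[OF U p(1)] by simp
  ultimately show ?thesis by linarith
qed

section \<open>Simplicial chains\<close>

text \<open>Pairing the terms \<open>(w, v)\<close> and \<open>(v, w)\<close> instead of arguing \<open>S = -S\<close> keeps this valid in
  characteristic 2.\<close>

lemma sum_offdiag_antisym_eq_0: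
  fixes f :: "'a::linorder \<Rightarrow> 'a \<Rightarrow> 'b::ab_group_add"
  assumes "finite D" and antisym: "\<And>v w. v \<in> D \<Longrightarrow> w \<in> D \<Longrightarrow> v \<noteq> w \<Longrightarrow> f v w = - f w v"
  shows "(\<Sum>w\<in>D. \<Sum>v\<in>D - {w}. f w v) = 0"
proof -
  define h where "h w v = (if w < v then f w v else 0)" for w v
  have "(\<Sum>v\<in>D - {w}. f w v) = (\<Sum>v\<in>D. h w v - h v w)" if "w \<in> D" for w
  proof -
    have "h w v - h v w = (if v = w then 0 else f w v)" if "v \<in> D" for v
      using antisym[OF that \<open>w \<in> D\<close>] by (cases v w rule: linorder_cases) (auto simp: h_def)
    then have "(\<Sum>v\<in>D. h w v - h v w) = (\<Sum>v\<in>D. if v = w then 0 else f w v)"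
      by (rule sum.cong[OF refl])
    also have "\<dots> = (\<Sum>v\<in>D - {w}. f w v)"
      using assms(1) that by (simp add: sum.If_cases Diff_eq Int_commute)
    finally show ?thesis by simp
  qed
  then have "(\<Sum>w\<in>D. \<Sum>v\<in>D - {w}. f w v) = (\<Sum>w\<in>D. \<Sum>v\<in>D. h w v) - (\<Sum>w\<in>D. \<Sum>v\<in>D. h v w)"
    by (simp add: sum_subtractf)
  also have "(\<Sum>w\<in>D. \<Sum>v\<in>D. h v w) = (\<Sum>w\<in>D. \<Sum>v\<in>D. h w v)" by (rule sum.swap)
  finally show ?thesis by simp
qed

definition face_sign :: "'a::linorder \<Rightarrow> 'a set \<Rightarrow> 'f::field" where
  "face_sign v \<tau> = (-1) ^ card {w\<in>\<tau>. w < v}"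

text \<open>The boundary \<^const>\<open>bd\<close> sums over the vertices \<open>v\<close> with \<open>c (insert v \<tau>) \<noteq> 0\<close>, which hides its
  linearity; \<open>boundary_on V\<close> sums over a fixed finite vertex set instead and agrees with it on
  chains over \<open>V\<close> (\<open>bd_eq_boundary_on\<close>).\<close>

definition boundary_on :: "'a::linorder set \<Rightarrow> ('a set \<Rightarrow> 'f::field) \<Rightarrow> ('a set \<Rightarrow> 'f)" where
  "boundary_on V c \<tau> = (\<Sum>v\<in>V - \<tau>. face_sign v \<tau> * c (insert v \<tau>))"

lemma face_sign_mult_self: "face_sign v \<tau> * face_sign v \<tau> = (1::'f::field)"
  by (simp add: face_sign_def flip: power_add mult_2)

lemma face_sign_insert:
  assumes "finite \<tau>" "w \<notin> \<tau>"
  shows "(face_sign v (insert w \<tau>) :: 'f::field) = (if w < v then - face_sign v \<tau> else face_sign v \<tau>)"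
proof (cases "w < v")
  case True
  then have "{x\<in>insert w \<tau>. x < v} = insert w {x\<in>\<tau>. x < v}" by auto
  moreover have "card (insert w {x\<in>\<tau>. x < v}) = Suc (card {x\<in>\<tau>. x < v})"
    using assms by (intro card_insert_disjoint) auto
  ultimately show ?thesis using True by (simp add: face_sign_def)
next
  case False
  then have "{x\<in>insert w \<tau>. x < v} = {x\<in>\<tau>. x < v}" by auto
  then show ?thesis using False by (simp add: face_sign_def)
qed

lemma face_sign_swap_insert:
  assumes "finite \<tau>" "w \<notin> \<tau>" "v \<notin> \<tau>" "w \<noteq> v"
  shows "(face_sign v (insert w \<tau>) * face_sign w (insert v \<tau>) :: 'f::field)
    = - (face_sign v \<tau> * face_sign w \<tau>)"
proof (cases w v rule: linorder_cases)
  case less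
  then have "\<not> v < w" by simp
  with less show ?thesis
    using face_sign_insert[OF assms(1,2), of v, where 'f='f] face_sign_insert[OF assms(1,3), of w, where 'f='f] by simp
next
  case greater
  then have "\<not> w < v" by simp
  with greater show ?thesis
    using face_sign_insert[OF assms(1,2), of v, where 'f='f] face_sign_insert[OF assms(1,3), of w, where 'f='f] by simp
qed (use assms(4) in simp)

lemma face_sign_swap_iterated:
  assumes "finite \<tau>" "w \<notin> \<tau>" "v \<notin> \<tau>" "w \<noteq> v"
  shows "(face_sign v \<tau> * face_sign w (insert v \<tau>) :: 'f::field)
    = - (face_sign w \<tau> * face_sign v (insert w \<tau>))"
proof (cases w v rule: linorder_cases)
  case less
  then have "\<not> v < w" by simp
  with less show ?thesis
    using face_sign_insert[OF assms(1,2), of v, where 'f='f] face_sign_insert[OF assms(1,3), of w, where 'f='f] by (simp add: mult.commute)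
next
  case greater
  then have "\<not> w < v" by simp
  with greater show ?thesis
    using face_sign_insert[OF assms(1,2), of v, where 'f='f] face_sign_insert[OF assms(1,3), of w, where 'f='f] by (simp add: mult.commute)
qed (use assms(4) in simp)

lemma boundary_on_hom: "module_hom fscale fscale (boundary_on V :: ('a::linorder set \<Rightarrow> 'f::field) \<Rightarrow> _)"
proof -
  have "boundary_on V (c + d) = boundary_on V c + boundary_on V d" for c d :: "'a set \<Rightarrow> 'f"
    by (rule ext) (simp add: boundary_on_def sum.distrib ring_distribs)
  moreover have "boundary_on V (fscale a c) = fscale a (boundary_on V c)" for a and c :: "'a set \<Rightarrow> 'f"
    by (rule ext) (simp add: boundary_on_def fscale_def sum_distrib_left mult.left_commute)
  ultimately show ?thesis
    unfolding module_hom_iff by (auto intro: fs.module_axioms)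
qed

lemma boundary_on_boundary_on_eq:
  "boundary_on V (boundary_on V c) \<rho> = (\<Sum>w\<in>V - \<rho>. \<Sum>v\<in>V - \<rho> - {w}.
     face_sign w \<rho> * face_sign v (insert w \<rho>) * c (insert v (insert w \<rho>)))"
  unfolding boundary_on_def sum_distrib_left
proof (rule sum.cong[OF refl])
  fix w
  have "V - insert w \<rho> = V - \<rho> - {w}" by blast
  then show "(\<Sum>v\<in>V - insert w \<rho>. face_sign w \<rho> * (face_sign v (insert w \<rho>) * c (insert v (insert w \<rho>))))
    = (\<Sum>v\<in>V - \<rho> - {w}. face_sign w \<rho> * face_sign v (insert w \<rho>) * c (insert v (insert w \<rho>)))"
    by (simp only: mult.assoc)
qed

lemma boundary_on_boundary_on:
  fixes c :: "'a::linorder set \<Rightarrow> 'f::field"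
  assumes "finite V" and fin: "\<And>\<sigma>. c \<sigma> \<noteq> 0 \<Longrightarrow> finite \<sigma>"
  shows "boundary_on V (boundary_on V c) = 0"
proof (rule ext)
  fix \<rho>
  define f where "f w v = face_sign w \<rho> * face_sign v (insert w \<rho>) * c (insert v (insert w \<rho>))"
    for w v
  have "(\<Sum>w\<in>V - \<rho>. \<Sum>v\<in>V - \<rho> - {w}. f w v) = 0"
  proof (cases "finite \<rho>")
    case True
    have f_antisym: "f v w = - f w v" if "v \<in> V - \<rho>" "w \<in> V - \<rho>" "v \<noteq> w" for v w
    proof -
      have ins: "insert w (insert v \<rho>) = insert v (insert w \<rho>)" by blast
      have swap: "face_sign v \<rho> * face_sign w (insert v \<rho>)
          = - (face_sign w \<rho> * face_sign v (insert w \<rho>) :: 'f)"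
        by (rule face_sign_swap_iterated[OF True]) (use that in auto)
      show ?thesis unfolding f_def ins swap by (rule mult_minus_left)
    qed
    show ?thesis by (rule sum_offdiag_antisym_eq_0[OF finite_Diff[OF assms(1)] f_antisym])
  next
    case False
    have "c (insert v (insert w \<rho>)) = 0" for v w
      using fin[of "insert v (insert w \<rho>)"] False by auto
    then show ?thesis by (simp add: f_def)
  qed
  then show "boundary_on V (boundary_on V c) \<rho> = 0 \<rho>"
    unfolding boundary_on_boundary_on_eq f_def by simp
qed

definition cone_chain :: "'a::linorder \<Rightarrow> ('a set \<Rightarrow> 'f::field) \<Rightarrow> ('a set \<Rightarrow> 'f)" where
  "cone_chain w z \<sigma> = (if w \<in> \<sigma> then face_sign w (\<sigma> - {w}) * z (\<sigma> - {w}) else 0)"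

lemma boundary_on_cone_chain_outside:
  assumes "finite V" "w \<in> V" "w \<notin> \<tau>"
  shows "boundary_on V (cone_chain w z) \<tau> = (z \<tau> :: 'f::field)"
proof -
  have "boundary_on V (cone_chain w z) \<tau>
      = face_sign w \<tau> * cone_chain w z (insert w \<tau>)
        + (\<Sum>v\<in>V - \<tau> - {w}. face_sign v \<tau> * cone_chain w z (insert v \<tau>))"
    unfolding boundary_on_def using assms by (intro sum.remove) auto
  also have "(\<Sum>v\<in>V - \<tau> - {w}. face_sign v \<tau> * cone_chain w z (insert v \<tau>)) = 0"
    using assms(3) by (intro sum.neutral) (auto simp: cone_chain_def)
  also have "insert w \<tau> - {w} = \<tau>" using assms(3) by auto
  then have "face_sign w \<tau> * cone_chain w z (insert w \<tau>) = face_sign w \<tau> * face_sign w \<tau> * z \<tau>"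
    by (simp add: cone_chain_def)
  finally show ?thesis by (simp add: face_sign_mult_self)
qed

lemma boundary_on_cone_chain_through_apex:
  fixes z :: "'a::linorder set \<Rightarrow> 'f::field"
  assumes "finite V" "w \<in> V" "finite \<tau>" "w \<in> \<tau>"
    and cycle: "boundary_on V z (\<tau> - {w}) = 0"
  shows "boundary_on V (cone_chain w z) \<tau> = z \<tau>"
proof -
  define \<tau>' where "\<tau>' = \<tau> - {w}"
  have \<tau>: "\<tau> = insert w \<tau>'" "w \<notin> \<tau>'" "finite \<tau>'" using assms(3,4) unfolding \<tau>'_def by auto
  have "face_sign v \<tau> * cone_chain w z (insert v \<tau>)
      = - face_sign w \<tau>' * (face_sign v \<tau>' * z (insert v \<tau>'))" if "v \<in> V - \<tau>" for v
  proof -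
    have "insert v \<tau> - {w} = insert v \<tau>'" using that \<tau> by auto
    then have "face_sign v \<tau> * cone_chain w z (insert v \<tau>)
        = (face_sign v \<tau> * face_sign w (insert v \<tau>')) * z (insert v \<tau>')"
      using \<tau>(1) by (simp add: cone_chain_def)
    also have "\<dots> = - (face_sign v \<tau>' * face_sign w \<tau>') * z (insert v \<tau>')"
      using face_sign_swap_insert[OF \<tau>(3,2), of v, where 'f='f] that \<tau> by auto
    finally show ?thesis by (simp add: algebra_simps)
  qed
  then have "boundary_on V (cone_chain w z) \<tau>
      = - face_sign w \<tau>' * (\<Sum>v\<in>V - \<tau>. face_sign v \<tau>' * z (insert v \<tau>'))"
    unfolding boundary_on_def sum_distrib_left by (rule sum.cong[OF refl])
  also have "(\<Sum>v\<in>V - \<tau>. face_sign v \<tau>' * z (insert v \<tau>')) = - (face_sign w \<tau>' * z \<tau>)"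
  proof -
    have "V - \<tau>' = insert w (V - \<tau>)" using \<tau> assms(2) by auto
    then have "0 = (\<Sum>v\<in>insert w (V - \<tau>). face_sign v \<tau>' * z (insert v \<tau>'))"
      using cycle by (simp add: boundary_on_def \<tau>'_def)
    also have "\<dots> = face_sign w \<tau>' * z \<tau> + (\<Sum>v\<in>V - \<tau>. face_sign v \<tau>' * z (insert v \<tau>'))"
      using assms(1) \<tau> by (simp add: sum.insert)
    finally show ?thesis by (simp add: eq_neg_iff_add_eq_0 add.commute)
  qed
  finally show ?thesis by (simp add: mult.assoc[symmetric] face_sign_mult_self)
qed

lemma boundary_on_cone_chain:
  fixes z :: "'a::linorder set \<Rightarrow> 'f::field"
  assumes "finite V" "w \<in> V" and fin: "\<And>\<sigma>. z \<sigma> \<noteq> 0 \<Longrightarrow> finite \<sigma>"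
    and cycle: "boundary_on V z = 0"
  shows "boundary_on V (cone_chain w z) = z"
proof (rule ext)
  fix \<tau>
  consider "w \<notin> \<tau>" | "w \<in> \<tau>" "finite \<tau>" | "infinite \<tau>" by blast
  then show "boundary_on V (cone_chain w z) \<tau> = z \<tau>"
  proof cases
    case 1
    then show ?thesis by (rule boundary_on_cone_chain_outside[OF assms(1,2)])
  next
    case 2
    then show ?thesis using cycle by (intro boundary_on_cone_chain_through_apex[OF assms(1,2)]) simp_all
  next
    case 3
    then have "z (insert v \<tau> - {w}) = 0" "z \<tau> = 0" for v
      using fin[of "insert v \<tau> - {w}"] fin[of \<tau>] by auto
    then show ?thesis unfolding boundary_on_def cone_chain_def by (simp add: sum.neutral)
  qed
qed

definition complex_on :: "'a set \<Rightarrow> 'a set set \<Rightarrow> bool" where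
  "complex_on V X \<longleftrightarrow> X \<subseteq> Pow V \<and> (\<forall>\<sigma>\<in>X. \<forall>\<tau>. \<tau> \<subseteq> \<sigma> \<longrightarrow> \<tau> \<in> X)"

lemma complex_on_subset: "complex_on V X \<Longrightarrow> \<sigma> \<in> X \<Longrightarrow> \<tau> \<subseteq> \<sigma> \<Longrightarrow> \<tau> \<in> X"
  unfolding complex_on_def by blast

lemma complex_on_Pow: "complex_on V X \<Longrightarrow> X \<subseteq> Pow V"
  unfolding complex_on_def by blast

lemma complex_on_Un: "complex_on V A \<Longrightarrow> complex_on V B \<Longrightarrow> complex_on V (A \<union> B)"
  unfolding complex_on_def by (intro conjI Un_least ballI allI impI; elim conjE UnE) auto

lemma complex_on_Int: "complex_on V A \<Longrightarrow> complex_on V B \<Longrightarrow> complex_on V (A \<inter> B)"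
  unfolding complex_on_def by (intro conjI ballI allI impI; elim conjE IntE) auto

lemma sum_apply: "sum f A x = (\<Sum>a\<in>A. f a x)"
  by (induction A rule: infinite_finite_induct) auto

lemma add_mem_chains:
  assumes "a \<in> chains F k X" "b \<in> chains F k X"
  shows "a + b \<in> chains F k X"
proof -
  have "\<sigma> \<in> X \<and> finite \<sigma> \<and> int (card \<sigma>) = k + 1" if "(a + b) \<sigma> \<noteq> 0" for \<sigma>
  proof -
    from that have "a \<sigma> \<noteq> 0 \<or> b \<sigma> \<noteq> 0" by auto
    with assms show ?thesis unfolding chains_def by blast
  qed
  then show ?thesis unfolding chains_def by blast
qed

lemma chains_mono: "L \<subseteq> K \<Longrightarrow> chains F k L \<subseteq> chains F k K"
  unfolding chains_def by blast

lemma subspace_chains: "fs.subspace (chains F k X)"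
  unfolding fs.subspace_def
proof (intro conjI ballI allI)
  show "0 \<in> chains F k X" by (simp add: chains_def)
  show "fscale a c \<in> chains F k X" if "c \<in> chains F k X" for a c
    using that unfolding chains_def fscale_def by simp
qed (rule add_mem_chains)

lemma fin_dim_chains:
  assumes "finite X"
  shows "fin_dim (chains F k X :: ('a set \<Rightarrow> 'f::field) set)"
proof -
  define \<delta> :: "'a set \<Rightarrow> 'a set \<Rightarrow> 'f" where "\<delta> s t = (if t = s then 1 else 0)" for s t
  have "c \<in> fs.span (\<delta> ` X)" if "c \<in> chains F k X" for c :: "'a set \<Rightarrow> 'f"
  proof -
    have "c = (\<Sum>s\<in>X. fscale (c s) (\<delta> s))"
    proof
      fix t
      have "(\<Sum>s\<in>X. fscale (c s) (\<delta> s)) t = (if t \<in> X then c t else 0)"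
        using assms by (simp add: sum_apply fscale_def \<delta>_def if_distrib sum.delta cong: if_cong)
      then show "c t = (\<Sum>s\<in>X. fscale (c s) (\<delta> s)) t"
        using that unfolding chains_def by auto
    qed
    also have "\<dots> \<in> fs.span (\<delta> ` X)"
      by (intro fs.span_sum fs.span_scale fs.span_base) auto
    finally show ?thesis .
  qed
  then show ?thesis unfolding fin_dim_def using assms by blast
qed

lemma chains_Un: "chains F k (A \<union> B) = subspace_sum (chains F k A) (chains F k B)"
proof
  show "chains F k (A \<union> B) \<subseteq> subspace_sum (chains F k A) (chains F k B)"
  proof
    fix c assume c: "c \<in> chains F k (A \<union> B)"
    let ?a = "\<lambda>\<sigma>. if \<sigma> \<in> A then c \<sigma> else 0" and ?b = "\<lambda>\<sigma>. if \<sigma> \<in> A then 0 else c \<sigma>"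
    have "?a \<in> chains F k A" "?b \<in> chains F k B" "c = ?a + ?b"
      using c unfolding chains_def by auto
    then show "c \<in> subspace_sum (chains F k A) (chains F k B)" unfolding subspace_sum_def by blast
  qed
  show "subspace_sum (chains F k A) (chains F k B) \<subseteq> chains F k (A \<union> B)"
  proof
    fix c assume "c \<in> subspace_sum (chains F k A) (chains F k B)"
    then obtain a b where "a \<in> chains F k A" "b \<in> chains F k B" "c = a + b"
      unfolding subspace_sum_def by blast
    then show "c \<in> chains F k (A \<union> B)"
      using chains_mono[of A "A \<union> B"] chains_mono[of B "A \<union> B"] add_mem_chains by blast
  qed
qed

lemma chains_Int: "chains F k A \<inter> chains F k B = chains F k (A \<inter> B)"
  unfolding chains_def by auto

lemma boundary_on_chains:
  assumes "complex_on V X" "c \<in> chains F (k + 1) X"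
  shows "boundary_on V c \<in> chains F k X"
  unfolding chains_def
proof (intro CollectI allI impI)
  fix \<tau> assume "boundary_on V c \<tau> \<noteq> 0"
  then obtain v where v: "v \<in> V - \<tau>" "c (insert v \<tau>) \<noteq> 0"
    unfolding boundary_on_def using sum.neutral[of "V - \<tau>"] by force
  then have "insert v \<tau> \<in> X" "finite \<tau>" "int (card (insert v \<tau>)) = k + 2"
    using assms(2) unfolding chains_def by auto
  moreover have "card (insert v \<tau>) = Suc (card \<tau>)" using v \<open>finite \<tau>\<close> by auto
  ultimately show "\<tau> \<in> X \<and> finite \<tau> \<and> int (card \<tau>) = k + 1"
    using complex_on_subset[OF assms(1)] by auto
qed

lemma bd_eq_boundary_on:
  assumes "finite V" "X \<subseteq> Pow V" "c \<in> chains F k X"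
  shows "bd c = boundary_on V c"
proof
  fix \<tau>
  have "{v. v \<notin> \<tau> \<and> c (insert v \<tau>) \<noteq> 0} \<subseteq> V - \<tau>"
    using assms(2,3) unfolding chains_def by auto
  then show "bd c \<tau> = boundary_on V c \<tau>"
    unfolding bd_def boundary_on_def face_sign_def
    by (intro sum.mono_neutral_left) (use assms(1) in auto)
qed

context
  fixes V :: "'a::linorder set" and X :: "'a set set"
  assumes V: "finite V" and X: "complex_on V X"
begin

lemma cycles_eq_kernel: "cycles F k X = {c \<in> chains F k X. boundary_on V c = 0}"
proof -
  have "bd c = (\<lambda>_. 0) \<longleftrightarrow> boundary_on V c = 0" if "c \<in> chains F k X" for c
    using bd_eq_boundary_on[OF V complex_on_Pow[OF X] that] by (simp add: zero_fun_def)
  then show ?thesis unfolding cycles_def by blast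
qed

lemma boundaries_eq_image: "boundaries F k X = boundary_on V ` chains F (k + 1) X"
  unfolding boundaries_def using bd_eq_boundary_on[OF V complex_on_Pow[OF X]]
  by (intro image_cong) auto

lemma complex_on_finite: "finite X"
  using V complex_on_Pow[OF X] by (meson finite_Pow_iff finite_subset)

lemma subspace_cycles: "fs.subspace (cycles F k X)"
proof -
  interpret b: module_hom fscale fscale "boundary_on V" by (rule boundary_on_hom)
  have "cycles F k X = chains F k X \<inter> {c. boundary_on V c = 0}" unfolding cycles_eq_kernel by auto
  then show ?thesis using fs.subspace_inter[OF subspace_chains b.subspace_kernel] by simp
qed

lemma subspace_boundaries: "fs.subspace (boundaries F k X)"
proof -
  interpret b: module_hom fscale fscale "boundary_on V" by (rule boundary_on_hom)
  show ?thesis unfolding boundaries_eq_image by (rule b.subspace_image[OF subspace_chains])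
qed

lemma cycles_subset_chains: "cycles F k X \<subseteq> chains F k X"
  unfolding cycles_def by blast

lemma boundaries_subset_cycles: "boundaries F k X \<subseteq> cycles F k X"
proof
  fix b assume "b \<in> boundaries F k X"
  then obtain c where c: "c \<in> chains F (k + 1) X" "b = boundary_on V c"
    unfolding boundaries_eq_image by blast
  have "boundary_on V b = 0" unfolding c(2)
    by (rule boundary_on_boundary_on[OF V]) (use c(1) in \<open>auto simp: chains_def\<close>)
  then show "b \<in> cycles F k X" unfolding cycles_eq_kernel using boundary_on_chains[OF X c(1)] c(2) by auto
qed

lemma fin_dim_cycles: "fin_dim (cycles F k X)"
  using fin_dim_chains[OF complex_on_finite] cycles_subset_chains by (rule fin_dim_subset)

lemma fin_dim_boundaries: "fin_dim (boundaries F k X)"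
  using fin_dim_cycles boundaries_subset_cycles by (rule fin_dim_subset)

lemma fdim_chains: "fdim (chains F k X) = fdim (cycles F k X) + fdim (boundaries F (k - 1) X)"
  unfolding cycles_eq_kernel boundaries_eq_image
  using rank_nullity[OF subspace_chains fin_dim_chains[OF complex_on_finite] boundary_on_hom] by simp

lemma cycles_eq_boundaries_cone:
  assumes "w \<in> V" and cone: "\<And>\<sigma>. \<sigma> \<in> X \<Longrightarrow> insert w \<sigma> \<in> X"
  shows "cycles F k X = boundaries F k X"
proof
  show "cycles F k X \<subseteq> boundaries F k X"
  proof
    fix z assume "z \<in> cycles F k X"
    then have z: "z \<in> chains F k X" "boundary_on V z = 0" unfolding cycles_eq_kernel by auto
    have "boundary_on V (cone_chain w z) = z"
      by (rule boundary_on_cone_chain[OF V assms(1) _ z(2)]) (use z(1) in \<open>auto simp: chains_def\<close>)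
    moreover have "cone_chain w z \<in> chains F (k + 1) X"
      unfolding chains_def
    proof (intro CollectI allI impI)
      fix \<sigma> assume "cone_chain w z \<sigma> \<noteq> 0"
      then have "w \<in> \<sigma>" "z (\<sigma> - {w}) \<noteq> 0" unfolding cone_chain_def by (auto split: if_splits)
      then have "\<sigma> - {w} \<in> X" "finite (\<sigma> - {w})" "int (card (\<sigma> - {w})) = k + 1"
        using z(1) unfolding chains_def by auto
      moreover have "\<sigma> = insert w (\<sigma> - {w})" using \<open>w \<in> \<sigma>\<close> by blast
      moreover have "finite \<sigma>" using \<open>finite (\<sigma> - {w})\<close> by simp
      moreover have "card \<sigma> = Suc (card (\<sigma> - {w}))"
        using card_Suc_Diff1[OF \<open>finite \<sigma>\<close> \<open>w \<in> \<sigma>\<close>] by simp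
      ultimately show "\<sigma> \<in> X \<and> finite \<sigma> \<and> int (card \<sigma>) = k + 1 + 1"
        using cone[of "\<sigma> - {w}"] by auto
    qed
    ultimately show "z \<in> boundaries F k X" unfolding boundaries_eq_image by force
  qed
qed (rule boundaries_subset_cycles)

end

section \<open>Mayer--Vietoris for an acyclic subcomplex\<close>

lemma cycles_Int: "cycles F k A \<inter> cycles F k B = cycles F k (A \<inter> B)"
  unfolding cycles_def chains_def by auto

lemma cycles_mono: "L \<subseteq> K \<Longrightarrow> cycles F k L \<subseteq> cycles F k K"
  unfolding cycles_def using chains_mono by blast

lemma boundaries_mono: "L \<subseteq> K \<Longrightarrow> boundaries F k L \<subseteq> boundaries F k K"
  unfolding boundaries_def using chains_mono by (rule image_mono)

lemma fdim_chains_Un_Int: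
  assumes "finite A" "finite B"
  shows "fdim (chains F k (A \<union> B)) + fdim (chains F k (A \<inter> B))
    = fdim (chains F k A) + fdim (chains F k B :: ('a set \<Rightarrow> 'f::field) set)"
  using fdim_subspace_sum_add_fdim_Int[OF subspace_chains[of F k] fin_dim_chains[OF assms(1)]
      subspace_chains[of F k] fin_dim_chains[OF assms(2)]]
  unfolding chains_Un chains_Int .

lemma boundaries_Un:
  fixes F :: "'f::field itself"
  assumes V: "finite V" and A: "complex_on V A" and B: "complex_on V B"
  shows "boundaries F k (A \<union> B) = subspace_sum (boundaries F k A) (boundaries F k B)"
proof -
  interpret b: module_hom fscale fscale "boundary_on V" by (rule boundary_on_hom)
  have "boundary_on V ` subspace_sum P Q = subspace_sum (boundary_on V ` P) (boundary_on V ` Q)"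
    for P Q :: "('a set \<Rightarrow> 'f) set"
  proof
    show "boundary_on V ` subspace_sum P Q \<subseteq> subspace_sum (boundary_on V ` P) (boundary_on V ` Q)"
    proof
      fix y assume "y \<in> boundary_on V ` subspace_sum P Q"
      then obtain p q where "p \<in> P" "q \<in> Q" "y = boundary_on V p + boundary_on V q"
        unfolding subspace_sum_def by (auto simp: b.add)
      then show "y \<in> subspace_sum (boundary_on V ` P) (boundary_on V ` Q)"
        unfolding subspace_sum_def by blast
    qed
    show "subspace_sum (boundary_on V ` P) (boundary_on V ` Q) \<subseteq> boundary_on V ` subspace_sum P Q"
    proof
      fix y assume "y \<in> subspace_sum (boundary_on V ` P) (boundary_on V ` Q)"
      then obtain p q where "p \<in> P" "q \<in> Q" "y = boundary_on V (p + q)"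
        unfolding subspace_sum_def by (auto simp: b.add)
      then show "y \<in> boundary_on V ` subspace_sum P Q" unfolding subspace_sum_def by blast
    qed
  qed
  then show ?thesis
    unfolding boundaries_eq_image[OF V A] boundaries_eq_image[OF V B] boundaries_eq_image[OF V complex_on_Un[OF A B]]
      chains_Un by simp
qed

lemma fdim_boundaries_Un_Int:
  assumes V: "finite V" and A: "complex_on V A" and B: "complex_on V B"
  shows "fdim (boundaries F k (A \<union> B)) + fdim (boundaries F k A \<inter> boundaries F k B)
    = fdim (boundaries F k A) + fdim (boundaries F k B :: ('a::linorder set \<Rightarrow> 'f::field) set)"
  using fdim_subspace_sum_add_fdim_Int[OF subspace_boundaries[OF V A, of F k] fin_dim_boundaries[OF V A]
      subspace_boundaries[OF V B, of F k] fin_dim_boundaries[OF V B]]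
  unfolding boundaries_Un[OF V A B] .

lemma incl_im_rank_subspace_sum:
  "incl_im_rank F j L K
    = int (fdim (subspace_sum (cycles F j L) (boundaries F j K))) - int (fdim (boundaries F j K))"
  unfolding incl_im_rank_def qdim_def subspace_sum_def plus_fun_def ..

definition acyclic_complex :: "'f::field itself \<Rightarrow> 'a::linorder set set \<Rightarrow> bool" where
  "acyclic_complex F X \<longleftrightarrow> (\<forall>j. cycles F j X = boundaries F j X)"

lemma acyclic_complex_cone:
  assumes "finite V" "complex_on V X" "w \<in> V" "\<And>\<sigma>. \<sigma> \<in> X \<Longrightarrow> insert w \<sigma> \<in> X"
  shows "acyclic_complex F X"
  unfolding acyclic_complex_def using cycles_eq_boundaries_cone[OF assms] by blast

lemma betti_acyclic: "acyclic_complex F X \<Longrightarrow> betti F k X = 0"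
  unfolding acyclic_complex_def betti_def qdim_def by simp

theorem betti_Un_acyclic:
  fixes F :: "'f::field itself"
  assumes V: "finite V" and A: "complex_on V A" and S: "complex_on V S"
    and acyclic: "acyclic_complex F S"
  shows "betti F k (A \<union> S)
    = betti F k A + incl_ker_rank F (k - 1) (A \<inter> S) A - incl_im_rank F k (A \<inter> S) A"
proof -
  have AS: "complex_on V (A \<inter> S)" by (rule complex_on_Int[OF A S])
  have ZS: "cycles F j S = boundaries F j S" for j
    using acyclic unfolding acyclic_complex_def by blast
  have BA_BS: "boundaries F j A \<inter> boundaries F j S = cycles F j (A \<inter> S) \<inter> boundaries F j A" for j
    using boundaries_subset_cycles[OF V A, of F j] unfolding cycles_Int[symmetric] ZS by blast
  note rank = fdim_chains[OF V complex_on_Un[OF A S], of F k] fdim_chains[OF V A, of F k]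
    fdim_chains[OF V S, of F k] fdim_chains[OF V AS, of F k]
  note grassmann = fdim_chains_Un_Int[OF complex_on_finite[OF V A] complex_on_finite[OF V S], of F k]
    fdim_boundaries_Un_Int[OF V A S, of F "k - 1", unfolded BA_BS]
    fdim_boundaries_Un_Int[OF V A S, of F k, unfolded BA_BS]
    fdim_subspace_sum_add_fdim_Int[OF subspace_cycles[OF V AS, of F k] fin_dim_cycles[OF V AS]
      subspace_boundaries[OF V A, of F k] fin_dim_boundaries[OF V A]]
  show ?thesis
    using rank grassmann ZS[of k]
    unfolding betti_def incl_ker_rank_def incl_im_rank_subspace_sum qdim_def by simp
qed

lemma incl_ker_rank_add_incl_im_rank:
  assumes V: "finite V" and L: "complex_on V L" and K: "complex_on V K"
  shows "incl_ker_rank F j L K + incl_im_rank F j L K = betti F j L"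
  using fdim_subspace_sum_add_fdim_Int[OF subspace_cycles[OF V L, of F j] fin_dim_cycles[OF V L]
      subspace_boundaries[OF V K, of F j] fin_dim_boundaries[OF V K]]
  unfolding incl_ker_rank_def incl_im_rank_subspace_sum betti_def qdim_def by simp

lemma subspace_sum_absorb:
  assumes "fs.subspace W" "U \<subseteq> W" "0 \<in> U"
  shows "subspace_sum U W = W"
proof
  show "subspace_sum U W \<subseteq> W"
    unfolding subspace_sum_def using assms(2) fs.subspace_add[OF assms(1)] by blast
  show "W \<subseteq> subspace_sum U W"
  proof
    fix y assume "y \<in> W"
    then show "y \<in> subspace_sum U W" unfolding subspace_sum_def
      using assms(3) by (intro CollectI exI[of _ 0] exI[of _ y]) simp
  qed
qed

lemma incl_im_rank_acyclic:
  assumes V: "finite V" and K: "complex_on V K" and "L \<subseteq> K" and "acyclic_complex F K"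
  shows "incl_im_rank F j L K = 0"
proof -
  have "cycles F j L \<subseteq> boundaries F j K"
    using cycles_mono[OF \<open>L \<subseteq> K\<close>] assms(4) unfolding acyclic_complex_def by blast
  moreover have "0 \<in> cycles F j L" unfolding cycles_def chains_def bd_def zero_fun_def by simp
  ultimately have "subspace_sum (cycles F j L) (boundaries F j K) = boundaries F j K"
    by (rule subspace_sum_absorb[OF subspace_boundaries[OF V K]])
  then show ?thesis unfolding incl_im_rank_subspace_sum by simp
qed

corollary betti_Un_acyclic_acyclic:
  fixes F :: "'f::field itself"
  assumes V: "finite V" and A: "complex_on V A" and S: "complex_on V S"
    and "acyclic_complex F A" "acyclic_complex F S"
  shows "betti F k (A \<union> S) = betti F (k - 1) (A \<inter> S)"
  using betti_Un_acyclic[OF V A S assms(5), of k]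
    incl_ker_rank_add_incl_im_rank[OF V complex_on_Int[OF A S] A, of F "k - 1"]
    incl_im_rank_acyclic[OF V A _ assms(4), of "A \<inter> S"]
    betti_acyclic[OF assms(4)]
  by simp

lemma incl_ker_rank_eq_0:
  assumes "cycles F j L = boundaries F j L" "L \<subseteq> K"
  shows "incl_ker_rank F j L K = 0"
proof -
  have "cycles F j L \<inter> boundaries F j K = boundaries F j L"
    using assms boundaries_mono[OF assms(2)] by blast
  then show ?thesis unfolding incl_ker_rank_def qdim_def by simp
qed

lemma fdim_zero: "fdim {0 :: 'b \<Rightarrow> 'f::field} = 0"
  using fs.dim_span_eq_card_independent[OF fs.independent_empty] by (simp add: fdim_def)

lemma fdim_span_single: "x \<noteq> 0 \<Longrightarrow> fdim (fs.span {x :: 'b \<Rightarrow> 'f::field}) = 1"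
  using fs.dim_span_eq_card_independent[of "{x}"] by (simp add: fdim_def)

lemma betti_minus1_empty_simplex:
  fixes F :: "'f::field itself"
  shows "betti F (-1) ({{}} :: 'a::linorder set set) = 1"
proof -
  define \<delta> :: "'a::linorder set \<Rightarrow> 'f" where "\<delta> \<sigma> = (if \<sigma> = {} then 1 else 0)" for \<sigma>
  have "chains F (-1) {{}} = range (\<lambda>a. fscale a \<delta>)"
  proof
    show "chains F (-1) {{}} \<subseteq> range (\<lambda>a. fscale a \<delta>)"
    proof
      fix c :: "'a set \<Rightarrow> 'f" assume "c \<in> chains F (-1) {{}}"
      then have "c = fscale (c {}) \<delta>" unfolding chains_def fscale_def \<delta>_def by fastforce
      then show "c \<in> range (\<lambda>a. fscale a \<delta>)" by blast
    qed
  qed (auto simp: chains_def fscale_def \<delta>_def split: if_splits)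
  then have chains: "chains F (-1) {{}} = fs.span {\<delta>}" by (simp add: fs.span_singleton)
  have "bd c = 0" if "c \<in> chains F (-1) {{}}" for c :: "'a set \<Rightarrow> 'f"
  proof -
    have "c (insert v \<tau>) = 0" for v \<tau> using that unfolding chains_def by blast
    then show ?thesis by (simp add: fun_eq_iff bd_def)
  qed
  then have "cycles F (-1) {{}} = fs.span {\<delta>}" unfolding cycles_def chains by (auto simp: zero_fun_def)
  moreover have "\<delta> \<noteq> 0" by (auto simp: \<delta>_def fun_eq_iff)
  moreover have "chains F 0 {{}} = {0 :: 'a set \<Rightarrow> 'f}" by (force simp: chains_def fun_eq_iff)
  then have "boundaries F (-1) {{}} = {0 :: 'a set \<Rightarrow> 'f}"
    unfolding boundaries_def bd_def by (auto simp: fun_eq_iff)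
  ultimately show ?thesis unfolding betti_def qdim_def by (simp add: fdim_span_single fdim_zero)
qed

lemma cycles_minus1_eq_boundaries:
  assumes V: "finite V" and X: "complex_on V X" and "{x} \<in> X"
  shows "cycles F (-1) X = boundaries F (-1) X"
proof
  have "x \<in> V" using complex_on_Pow[OF X] assms(3) by blast
  show "cycles F (-1) X \<subseteq> boundaries F (-1) X"
  proof
    fix c assume "c \<in> cycles F (-1) X"
    then have c: "c \<in> chains F (-1) X" by (rule cycles_subset_chains[OF V X, THEN subsetD])
    define y where "y \<sigma> = (if \<sigma> = {x} then c {} else 0)" for \<sigma>
    have "y \<in> chains F 0 X" using assms(3) unfolding chains_def y_def by auto
    moreover have "boundary_on V y = c"
    proof
      fix \<tau>
      show "boundary_on V y \<tau> = c \<tau>"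
      proof (cases "\<tau> = {}")
        case True
        have "boundary_on V y \<tau> = (\<Sum>v\<in>V. if v = x then c {} else 0)"
          unfolding boundary_on_def y_def True by (intro sum.cong) (auto simp: face_sign_def)
        then show ?thesis using \<open>x \<in> V\<close> V True by simp
      next
        case False
        have "c \<tau> = 0" using c False unfolding chains_def by auto
        moreover have "y (insert v \<tau>) = 0" if "v \<notin> \<tau>" for v
          using False that unfolding y_def by (auto simp: insert_eq_iff)
        ultimately show ?thesis unfolding boundary_on_def by simp
      qed
    qed
    ultimately show "c \<in> boundaries F (-1) X" unfolding boundaries_eq_image[OF V X] by force
  qed
qed (rule boundaries_subset_cycles[OF V X])

theorem betti_minus1:
  assumes V: "finite V" and X: "complex_on V X"
  shows "betti F (-1) X = (if X = {{}} then 1 else 0)"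
proof (cases "X = {{}}")
  case True
  then show ?thesis by (simp add: betti_minus1_empty_simplex)
next
  case False
  have "cycles F (-1) X = boundaries F (-1) X"
  proof (cases "X = {}")
    case True
    then have "chains F k X = {0}" for k by (auto simp: chains_def fun_eq_iff)
    then show ?thesis unfolding cycles_def boundaries_def bd_def by (auto simp: fun_eq_iff)
  next
    case False
    with \<open>X \<noteq> {{}}\<close> have "\<not> X \<subseteq> {{}}" by blast
    then obtain \<sigma> x where "\<sigma> \<in> X" "x \<in> \<sigma>" by blast
    then have "{x} \<in> X" using complex_on_subset[OF X] by blast
    then show ?thesis by (rule cycles_minus1_eq_boundaries[OF V X])
  qed
  with False show ?thesis unfolding betti_def qdim_def by simp
qed

section \<open>Adding an edge\<close>

definition deletion :: "'a set set \<Rightarrow> 'a set \<Rightarrow> 'a set set" where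
  "deletion K e = {\<tau> \<in> K. \<not> e \<subseteq> \<tau>}"

lemma mem_deletion_singleton [simp]: "\<tau> \<in> deletion K {x} \<longleftrightarrow> \<tau> \<in> K \<and> x \<notin> \<tau>"
  unfolding deletion_def by blast

lemma complex_on_deletion: "complex_on V K \<Longrightarrow> complex_on V (deletion K e)"
  unfolding complex_on_def deletion_def by (intro conjI ballI allI impI; elim conjE) auto

lemma mem_closed_star_iff:
  assumes "complex_on V K"
  shows "\<tau> \<in> closed_star K e \<longleftrightarrow> \<tau> \<union> e \<in> K"
proof
  assume "\<tau> \<in> closed_star K e"
  then obtain \<rho> where "\<rho> \<in> K" "e \<subseteq> \<rho>" "\<tau> \<subseteq> \<rho>" unfolding closed_star_def by blast
  then show "\<tau> \<union> e \<in> K" using complex_on_subset[OF assms, of \<rho> "\<tau> \<union> e"] by blast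
next
  assume "\<tau> \<union> e \<in> K"
  then show "\<tau> \<in> closed_star K e" unfolding closed_star_def by blast
qed

lemma closed_star_subset:
  assumes "complex_on V K"
  shows "closed_star K e \<subseteq> K"
proof
  fix \<tau> assume "\<tau> \<in> closed_star K e"
  then have "\<tau> \<union> e \<in> K" by (simp add: mem_closed_star_iff[OF assms])
  then show "\<tau> \<in> K" by (rule complex_on_subset[OF assms]) blast
qed

lemma complex_on_closed_star:
  assumes "complex_on V K"
  shows "complex_on V (closed_star K e)"
  unfolding complex_on_def
proof (intro conjI ballI allI impI)
  show "closed_star K e \<subseteq> Pow V" using closed_star_subset[OF assms] complex_on_Pow[OF assms] by blast
next
  fix \<sigma> \<tau> assume "\<sigma> \<in> closed_star K e" "\<tau> \<subseteq> \<sigma>"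
  then have "\<sigma> \<union> e \<in> K" "\<tau> \<union> e \<subseteq> \<sigma> \<union> e" by (auto simp: mem_closed_star_iff[OF assms])
  then have "\<tau> \<union> e \<in> K" by (rule complex_on_subset[OF assms])
  then show "\<tau> \<in> closed_star K e" by (simp add: mem_closed_star_iff[OF assms])
qed

lemma closed_star_cone:
  assumes "complex_on V K" "u \<in> e" "\<sigma> \<in> closed_star K e"
  shows "insert u \<sigma> \<in> closed_star K e"
proof -
  have "insert u \<sigma> \<union> e = \<sigma> \<union> e" using assms(2) by blast
  then show ?thesis using assms(3) by (simp add: mem_closed_star_iff[OF assms(1)])
qed

lemma deletion_Un_closed_star:
  assumes "complex_on V K"
  shows "deletion K e \<union> closed_star K e = K"
proof
  show "deletion K e \<union> closed_star K e \<subseteq> K"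
    unfolding deletion_def using closed_star_subset[OF assms] by blast
  show "K \<subseteq> deletion K e \<union> closed_star K e"
  proof
    fix \<tau> assume "\<tau> \<in> K"
    moreover have "e \<subseteq> \<tau> \<Longrightarrow> \<tau> \<union> e = \<tau>" by blast
    ultimately show "\<tau> \<in> deletion K e \<union> closed_star K e"
      unfolding deletion_def by (auto simp: mem_closed_star_iff[OF assms])
  qed
qed

context
  fixes V :: "'a::linorder set" and K :: "'a set set" and u v :: 'a
  assumes V: "finite V" and K: "complex_on V K" and edge: "{u, v} \<in> K" "u \<noteq> v"
begin

lemma acyclic_closed_star_edge: "acyclic_complex F (closed_star K {u, v})"
proof (rule acyclic_complex_cone[OF V complex_on_closed_star[OF K]])
  show "u \<in> V" using edge(1) complex_on_Pow[OF K] by blast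
qed (rule closed_star_cone[OF K], simp)

lemma acyclic_deletion_closed_star_avoiding:
  assumes "x \<in> {u, v}" "y \<in> {u, v}" "x \<noteq> y"
  shows "acyclic_complex F (deletion (deletion K {u, v} \<inter> closed_star K {u, v}) {y})"
proof (rule acyclic_complex_cone)
  show "complex_on V (deletion (deletion K {u, v} \<inter> closed_star K {u, v}) {y})"
    by (intro complex_on_deletion complex_on_Int complex_on_closed_star K)
  show "x \<in> V" using assms(1) edge(1) complex_on_Pow[OF K] by blast
  fix \<sigma> assume \<sigma>: "\<sigma> \<in> deletion (deletion K {u, v} \<inter> closed_star K {u, v}) {y}"
  then have star: "insert x \<sigma> \<in> closed_star K {u, v}" using closed_star_cone[OF K assms(1)] by simp
  moreover have "\<not> {u, v} \<subseteq> insert x \<sigma>" using \<sigma> assms by auto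
  ultimately show "insert x \<sigma> \<in> deletion (deletion K {u, v} \<inter> closed_star K {u, v}) {y}"
    using closed_star_subset[OF K] \<sigma> assms(3) unfolding deletion_def by auto
qed (rule V)

lemma deletion_closed_star_split:
  "deletion K {u, v} \<inter> closed_star K {u, v}
    = deletion (deletion K {u, v} \<inter> closed_star K {u, v}) {v}
      \<union> deletion (deletion K {u, v} \<inter> closed_star K {u, v}) {u}"
  unfolding deletion_def by blast

lemma link_edge_eq:
  "link K {u, v}
    = deletion (deletion K {u, v} \<inter> closed_star K {u, v}) {v}
      \<inter> deletion (deletion K {u, v} \<inter> closed_star K {u, v}) {u}"
  using closed_star_subset[OF K] unfolding link_def deletion_def by blast

theorem betti_edge_insertion:
  "betti F k K = betti F k (deletion K {u, v})
    + incl_ker_rank F (k - 1) (deletion K {u, v} \<inter> closed_star K {u, v}) (deletion K {u, v})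
    - incl_im_rank F k (deletion K {u, v} \<inter> closed_star K {u, v}) (deletion K {u, v})"
  using betti_Un_acyclic[OF V complex_on_deletion[OF K, of "{u, v}"] complex_on_closed_star[OF K]
      acyclic_closed_star_edge]
  unfolding deletion_Un_closed_star[OF K] .

theorem incl_ranks_edge_link:
  "incl_ker_rank F j (deletion K {u, v} \<inter> closed_star K {u, v}) (deletion K {u, v})
    + incl_im_rank F j (deletion K {u, v} \<inter> closed_star K {u, v}) (deletion K {u, v})
    = betti F (j - 1) (link K {u, v})"
proof -
  let ?L = "deletion K {u, v} \<inter> closed_star K {u, v}"
  have L: "complex_on V ?L" by (intro complex_on_Int complex_on_deletion complex_on_closed_star K)
  have "betti F j (deletion ?L {v} \<union> deletion ?L {u})
      = betti F (j - 1) (deletion ?L {v} \<inter> deletion ?L {u})"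
    using acyclic_deletion_closed_star_avoiding[where x = u and y = v]
      acyclic_deletion_closed_star_avoiding[where x = v and y = u] edge(2)
    by (intro betti_Un_acyclic_acyclic[OF V complex_on_deletion[OF L] complex_on_deletion[OF L]])
      simp_all
  then have "betti F j ?L = betti F (j - 1) (link K {u, v})"
    by (simp only: deletion_closed_star_split[symmetric] link_edge_eq[symmetric])
  then show ?thesis by (simp only: incl_ker_rank_add_incl_im_rank[OF V L complex_on_deletion[OF K]])
qed

lemma incl_ker_rank_edge_minus1:
  "incl_ker_rank F (-1) (deletion K {u, v} \<inter> closed_star K {u, v}) (deletion K {u, v}) = 0"
proof (rule incl_ker_rank_eq_0)
  let ?L = "deletion K {u, v} \<inter> closed_star K {u, v}"
  have L: "complex_on V ?L" by (intro complex_on_Int complex_on_deletion complex_on_closed_star K)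
  have "{u} \<in> deletion K {u, v}"
    using complex_on_subset[OF K edge(1)] edge(2) unfolding deletion_def by auto
  moreover have "{u} \<in> closed_star K {u, v}"
    using edge(1) by (simp add: mem_closed_star_iff[OF K] insert_absorb insert_commute)
  ultimately have "{u} \<in> ?L" by blast
  then show "cycles F (-1) ?L = boundaries F (-1) ?L" by (rule cycles_minus1_eq_boundaries[OF V L])
qed blast

lemma complex_on_link_edge: "complex_on V (link K {u, v})"
  unfolding link_edge_eq by (intro complex_on_Int complex_on_deletion complex_on_closed_star K)

end

lemma complex_on_clique_complex: "complex_on V (clique_complex V E)"
  unfolding complex_on_def clique_complex_def
proof (intro conjI ballI allI impI subsetI)
  fix \<sigma> \<tau> assume "\<sigma> \<in> {\<sigma>. \<sigma> \<subseteq> V \<and> finite \<sigma> \<and> (\<forall>x\<in>\<sigma>. \<forall>y\<in>\<sigma>. x \<noteq> y \<longrightarrow> {x, y} \<in> E)}"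
    and "\<tau> \<subseteq> \<sigma>"
  moreover from this have "finite \<tau>" using finite_subset by blast
  ultimately show "\<tau> \<in> {\<sigma>. \<sigma> \<subseteq> V \<and> finite \<sigma> \<and> (\<forall>x\<in>\<sigma>. \<forall>y\<in>\<sigma>. x \<noteq> y \<longrightarrow> {x, y} \<in> E)}"
    by blast
qed auto

lemma clique_complex_deletion:
  assumes "u \<noteq> v" "{u, v} \<notin> E"
  shows "clique_complex V E = deletion (clique_complex V (insert {u, v} E)) {u, v}"
proof (rule set_eqI)
  fix \<tau>
  show "\<tau> \<in> clique_complex V E \<longleftrightarrow> \<tau> \<in> deletion (clique_complex V (insert {u, v} E)) {u, v}"
  proof
    assume \<tau>: "\<tau> \<in> clique_complex V E"
    then have "\<not> {u, v} \<subseteq> \<tau>" using assms unfolding clique_complex_def by auto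
    with \<tau> show "\<tau> \<in> deletion (clique_complex V (insert {u, v} E)) {u, v}"
      unfolding deletion_def clique_complex_def by auto
  next
    assume \<tau>: "\<tau> \<in> deletion (clique_complex V (insert {u, v} E)) {u, v}"
    have "{x, y} \<noteq> {u, v}" if "x \<in> \<tau>" "y \<in> \<tau>" for x y
      using \<tau> that unfolding deletion_def by (auto simp: doubleton_eq_iff)
    with \<tau> show "\<tau> \<in> clique_complex V E" unfolding deletion_def clique_complex_def by auto
  qed
qed

theorem lemma6p1:
  fixes V :: "'a::linorder set" and E :: "'a set set" and u v :: 'a
    and F :: "'f::field itself"
  assumes "finite V"
    and "\<forall>e\<in>E. e \<subseteq> V \<and> card e = 2"
    and "u \<in> V" and "v \<in> V" and "u \<noteq> v" and "{u, v} \<notin> E"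
  shows "(\<forall>k::int. k > 0 \<longrightarrow>
            betti F k (clique_complex V (insert {u, v} E)) =
              betti F k (clique_complex V E)
              + Fplus F (clique_complex V E) (clique_complex V (insert {u, v} E)) {u, v} k
              - Fminus F (clique_complex V E) (clique_complex V (insert {u, v} E)) {u, v} (k + 1))
       \<and> betti F 0 (clique_complex V (insert {u, v} E)) =
              betti F 0 (clique_complex V E)
              - Fminus F (clique_complex V E) (clique_complex V (insert {u, v} E)) {u, v} 1
       \<and> (\<forall>k::int. k > 1 \<longrightarrow>
            Fplus F (clique_complex V E) (clique_complex V (insert {u, v} E)) {u, v} k
            + Fminus F (clique_complex V E) (clique_complex V (insert {u, v} E)) {u, v} k =
              betti F (k - 2) (link (clique_complex V (insert {u, v} E)) {u, v}))
       \<and> Fplus F (clique_complex V E) (clique_complex V (insert {u, v} E)) {u, v} 1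
         + Fminus F (clique_complex V E) (clique_complex V (insert {u, v} E)) {u, v} 1 =
           (if link (clique_complex V (insert {u, v} E)) {u, v} = {{}} then 1 else 0)"
proof -
  let ?K = "clique_complex V E" and ?K' = "clique_complex V (insert {u, v} E)"
  note V = \<open>finite V\<close>
  have K': "complex_on V ?K'" by (rule complex_on_clique_complex)
  have edge: "{u, v} \<in> ?K'" "u \<noteq> v" using assms(3-5) by (auto simp: clique_complex_def)
  have K_eq: "?K = deletion ?K' {u, v}" by (rule clique_complex_deletion) fact+
  have betti_K': "betti F k ?K' = betti F k ?K + Fplus F ?K ?K' {u, v} k - Fminus F ?K ?K' {u, v} (k + 1)"
    for k
    unfolding Fplus_def Fminus_def K_eq using betti_edge_insertion[OF V K' edge] by simp
  have F_sum: "Fplus F ?K ?K' {u, v} k + Fminus F ?K ?K' {u, v} k = betti F (k - 2) (link ?K' {u, v})"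
    for k
    unfolding Fplus_def Fminus_def K_eq using incl_ranks_edge_link[OF V K' edge, where F = F and j = "k - 1"] by simp
  have "Fplus F ?K ?K' {u, v} 0 = 0"
    unfolding Fplus_def K_eq using incl_ker_rank_edge_minus1[OF V K' edge] by simp
  show ?thesis
  proof (intro conjI allI impI)
    show "betti F 0 ?K' = betti F 0 ?K - Fminus F ?K ?K' {u, v} 1"
      using betti_K'[of 0] \<open>Fplus F ?K ?K' {u, v} 0 = 0\<close> by simp
    have "Fplus F ?K ?K' {u, v} 1 + Fminus F ?K ?K' {u, v} 1 = betti F (-1) (link ?K' {u, v})"
      using F_sum[of 1] by simp
    also have "\<dots> = (if link ?K' {u, v} = {{}} then 1 else 0)"
      by (rule betti_minus1[OF V complex_on_link_edge[OF V K' edge]])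
    finally show "Fplus F ?K ?K' {u, v} 1 + Fminus F ?K ?K' {u, v} 1
      = (if link ?K' {u, v} = {{}} then 1 else 0)" .
  qed (use betti_K' F_sum in blast)+
qed

end
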